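(* Let $G$ be a $2$-connected $\{P_k, K_m\}$-free graph of order $n\geq k$. If $G$ contains a strong dominating path $P$ such that $d(u)\geq \delta_k$ for every vertex $u\in V(G)\setminus V(P)$, then $G$ is a subgraph of $H \vee I_{n-\delta_k}$ if $k$ is even, and of $H \vee ( I_{n-\delta_k-2} \cup K_2)$ if $k$ is odd, for some $K_{m-1}$-free graph $H$ on $\delta_k$ vertices.
   Context: All graphs are finite and simple. $K_n$, $P_n$, $I_n$ denote the complete graph, the path, and the edgeless graph on $n$ vertices. For disjoint graphs $G,H$: $G\cup H$ is their disjoint union and $G\vee H$ is obtained from $G\cup H$ by adding all edges between $V(G)$ and $V(H)$. A graph is $\mathcal H$-free if it contains no member of $\mathcal H$ as a subgraph. $\delta_k=\lfloor k/2\rfloor-1$. A path $P$ in $G$ is a strong dominating path if $N(v)\subseteq V(P)$ for every $v\in V(G)\setminus V(P)$, where $N(v)$ is the neighbourhood of $v$ in $G$. *)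

theory Defs
  imports Main
begin

type_synonym 'v graph = "'v set \<times> ('v \<Rightarrow> 'v \<Rightarrow> bool)"

definition verts :: "'v graph \<Rightarrow> 'v set" where "verts G = fst G"
definition adj :: "'v graph \<Rightarrow> 'v \<Rightarrow> 'v \<Rightarrow> bool" where "adj G = snd G"

definition simple_graph :: "'v graph \<Rightarrow> bool" where
  "simple_graph G \<longleftrightarrow> finite (verts G) \<and>
     (\<forall>u v. adj G u v \<longrightarrow> u \<in> verts G \<and> v \<in> verts G) \<and>
     (\<forall>u v. adj G u v \<longrightarrow> adj G v u) \<and> (\<forall>u. \<not> adj G u u)"

definition neighbours :: "'v graph \<Rightarrow> 'v \<Rightarrow> 'v set" where
  "neighbours G v = {u \<in> verts G. adj G v u}"

definition degree :: "'v graph \<Rightarrow> 'v \<Rightarrow> nat" where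
  "degree G v = card (neighbours G v)"

definition subgraph_of :: "'v graph \<Rightarrow> 'w graph \<Rightarrow> bool" where
  "subgraph_of G G' \<longleftrightarrow> (\<exists>f. inj_on f (verts G) \<and> f ` verts G \<subseteq> verts G' \<and>
     (\<forall>u\<in>verts G. \<forall>v\<in>verts G. adj G u v \<longrightarrow> adj G' (f u) (f v)))"

definition complete_graph :: "nat \<Rightarrow> nat graph" where
  "complete_graph n = ({0..<n}, \<lambda>i j. i < n \<and> j < n \<and> i \<noteq> j)"
definition path_graph :: "nat \<Rightarrow> nat graph" where
  "path_graph n = ({0..<n}, \<lambda>i j. i < n \<and> j < n \<and> (j = i + 1 \<or> i = j + 1))"
definition edgeless_graph :: "nat \<Rightarrow> nat graph" where
  "edgeless_graph n = ({0..<n}, \<lambda>i j. False)"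

definition disj_union :: "'v graph \<Rightarrow> 'w graph \<Rightarrow> ('v + 'w) graph" where
  "disj_union G H = (verts G <+> verts H,
     \<lambda>x y. case (x, y) of (Inl a, Inl b) \<Rightarrow> adj G a b
                       | (Inr a, Inr b) \<Rightarrow> adj H a b
                       | _ \<Rightarrow> False)"
definition graph_join :: "'v graph \<Rightarrow> 'w graph \<Rightarrow> ('v + 'w) graph" where
  "graph_join G H = (verts G <+> verts H,
     \<lambda>x y. case (x, y) of (Inl a, Inl b) \<Rightarrow> adj G a b
                       | (Inr a, Inr b) \<Rightarrow> adj H a b
                       | (Inl a, Inr b) \<Rightarrow> a \<in> verts G \<and> b \<in> verts H
                       | (Inr a, Inl b) \<Rightarrow> a \<in> verts H \<and> b \<in> verts G)"

definition free_of :: "'w graph \<Rightarrow> 'v graph \<Rightarrow> bool" where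
  "free_of F G \<longleftrightarrow> \<not> subgraph_of F G"

definition connected :: "'v graph \<Rightarrow> bool" where
  "connected G \<longleftrightarrow> verts G \<noteq> {} \<and>
     (\<forall>u\<in>verts G. \<forall>v\<in>verts G.
        (\<lambda>x y. adj G x y \<and> x \<in> verts G \<and> y \<in> verts G)\<^sup>*\<^sup>* u v)"

definition delete_vertex :: "'v graph \<Rightarrow> 'v \<Rightarrow> 'v graph" where
  "delete_vertex G v = (verts G - {v}, \<lambda>x y. adj G x y \<and> x \<noteq> v \<and> y \<noteq> v)"

definition two_connected :: "'v graph \<Rightarrow> bool" where
  "two_connected G \<longleftrightarrow> card (verts G) \<ge> 3 \<and> connected G \<and>
     (\<forall>v\<in>verts G. connected (delete_vertex G v))"

definition is_path :: "'v graph \<Rightarrow> 'v list \<Rightarrow> bool" where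
  "is_path G ps \<longleftrightarrow> ps \<noteq> [] \<and> distinct ps \<and> set ps \<subseteq> verts G \<and>
     (\<forall>i. Suc i < length ps \<longrightarrow> adj G (ps ! i) (ps ! Suc i))"

definition strong_dominating_path :: "'v graph \<Rightarrow> 'v list \<Rightarrow> bool" where
  "strong_dominating_path G ps \<longleftrightarrow> is_path G ps \<and>
     (\<forall>v \<in> verts G - set ps. neighbours G v \<subseteq> set ps)"

definition delta :: "nat \<Rightarrow> nat" where
  "delta k = k div 2 - 1"

end

theory Submission
  imports Defs
begin

text \<open>Extend \<open>P\<close> to a path \<open>Q\<close> that is longest among the paths containing \<open>V(P)\<close>. Then \<open>Q\<close> is
  still a strong dominating path, so every vertex \<open>u\<close> off \<open>Q\<close> has all its neighbours on \<open>Q\<close>.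
  Numbering \<open>Q\<close> as \<open>1, \<dots>, |Q|\<close>, the positions of these neighbours avoid both ends of \<open>Q\<close> and
  contain no two consecutive numbers, for otherwise \<open>u\<close> could be inserted into \<open>Q\<close>. Since
  \<open>|Q| < k\<close> and \<open>d(u) \<ge> t - 1\<close> with \<open>t = k div 2\<close>, this forces \<open>|Q| \<in> {2t - 1, 2t}\<close> and the
  positions to be \<open>{2, 4, \<dots>, 2j} \<union> {2j + 3, 2j + 5, \<dots>, 2t - 1}\<close> for some \<open>j\<close>. Rerouting \<open>Q\<close>
  along a chord or through two outside vertices shows that all outside vertices have the same
  \<open>j\<close> (for \<open>|Q| = 2t\<close> the reroutes have \<open>2t + 1\<close> vertices, and 2-connectedness gives \<open>t \<ge> 3\<close>),
  and that the only possible edge avoiding their common neighbourhood \<open>S\<close> joins the vertices at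
  positions \<open>2j + 1\<close> and \<open>2j + 2\<close>, which exists only if \<open>|Q| = 2t\<close>, i.e. if \<open>k\<close> is odd. So \<open>G\<close>
  embeds into the join of \<open>G[S]\<close> with \<open>G - S\<close>, and \<open>G[S]\<close> contains no \<open>K\<^sub>m\<^sub>-\<^sub>1\<close> because an
  outside vertex is adjacent to all of \<open>S\<close>.\<close>

lemma simple_graph_adj_sym: "simple_graph G \<Longrightarrow> adj G u v \<Longrightarrow> adj G v u"
  by (simp add: simple_graph_def)

lemma simple_graph_adj_verts: "simple_graph G \<Longrightarrow> adj G u v \<Longrightarrow> u \<in> verts G \<and> v \<in> verts G"
  by (simp add: simple_graph_def)

lemma simple_graph_no_loop: "simple_graph G \<Longrightarrow> \<not> adj G u u"
  by (simp add: simple_graph_def)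

lemma simple_graph_finite: "simple_graph G \<Longrightarrow> finite (verts G)"
  by (simp add: simple_graph_def)

lemma is_path_iff_successively:
  "is_path G ps \<longleftrightarrow> ps \<noteq> [] \<and> distinct ps \<and> set ps \<subseteq> verts G \<and> successively (adj G) ps"
  by (simp add: is_path_def successively_conv_nth)

lemma subgraph_of_path_graph:
  assumes "simple_graph G" "is_path G Q" "k \<le> length Q"
  shows "subgraph_of (path_graph k) G"
  unfolding subgraph_of_def
proof (intro exI[of _ "nth Q"] conjI ballI impI)
  show "inj_on ((!) Q) (verts (path_graph k))" "(!) Q ` verts (path_graph k) \<subseteq> verts G"
    using assms by (auto simp: inj_on_def verts_def path_graph_def is_path_def nth_eq_iff_index_eq)
  fix i j assume "adj (path_graph k) i j"
  then have "i < k" "j < k" "j = i + 1 \<or> i = j + 1" by (auto simp: adj_def path_graph_def)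
  then show "adj G (Q ! i) (Q ! j)"
    using assms simple_graph_adj_sym[OF assms(1)] unfolding is_path_def by auto
qed

lemma exists_maximal_path_extension:
  assumes "simple_graph G" "is_path G P"
  obtains Q where "is_path G Q" "set P \<subseteq> set Q"
    "\<And>Q'. is_path G Q' \<Longrightarrow> set Q \<subseteq> set Q' \<Longrightarrow> length Q' \<le> length Q"
proof -
  let ?ext = "\<lambda>Q. is_path G Q \<and> set P \<subseteq> set Q"
  have bound: "length Q < Suc (card (verts G))" if "is_path G Q" for Q
  proof -
    have "card (set Q) = length Q" "set Q \<subseteq> verts G"
      using that by (simp_all add: is_path_def distinct_card)
    then show ?thesis using card_mono[OF simple_graph_finite[OF assms(1)], of "set Q"] by simp
  qed
  have "\<exists>Q. ?ext Q \<and> (\<forall>Q'. ?ext Q' \<longrightarrow> length Q' \<le> length Q)"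
    by (rule ex_has_greatest_nat[of ?ext P length "Suc (card (verts G))"]) (use assms(2) bound in auto)
  then obtain Q where Q: "?ext Q" "\<forall>Q'. ?ext Q' \<longrightarrow> length Q' \<le> length Q" by blast
  show ?thesis
  proof (rule that)
    show "length Q' \<le> length Q" if "is_path G Q'" "set Q \<subseteq> set Q'" for Q'
      using Q that by blast
  qed (use Q in auto)
qed

lemma not_free_of_complete_graph_0: "\<not> free_of (complete_graph 0) G"
  unfolding free_of_def subgraph_of_def by (auto simp: verts_def complete_graph_def)

lemma two_connected_degree_ge_2:
  assumes sg: "simple_graph G" and tc: "two_connected G" and v: "v \<in> verts G"
  shows "2 \<le> degree G v"
proof (rule ccontr)
  assume "\<not> 2 \<le> degree G v"
  then have small: "card (neighbours G v) \<le> Suc 0" by (simp add: degree_def)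
  have fin: "finite (verts G)" and three: "3 \<le> card (verts G)"
    using sg tc by (simp_all add: simple_graph_def two_connected_def)
  obtain w where w: "w \<in> verts G" "w \<noteq> v" "neighbours G v \<subseteq> {w}"
  proof (cases "neighbours G v = {}")
    case True
    have "card (verts G - {v}) \<noteq> 0" using three fin v by (simp add: card_Diff_singleton)
    then obtain w where "w \<in> verts G - {v}" by (metis all_not_in_conv card.empty)
    with True that show ?thesis by blast
  next
    case False
    then obtain w where w: "w \<in> neighbours G v" by blast
    have "finite (neighbours G v)" using fin by (simp add: neighbours_def)
    then have "neighbours G v \<subseteq> {w}" using small w card_le_Suc0_iff_eq by blast
    with w that show ?thesis using simple_graph_no_loop[OF sg] by (auto simp: neighbours_def)
  qed
  have "card (verts G - {v, w}) \<noteq> 0" using three fin v w by (simp add: card_Diff_subset)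
  then obtain x where "x \<in> verts G - {v, w}" by (metis all_not_in_conv card.empty)
  then have x: "x \<in> verts G" "x \<noteq> v" "x \<noteq> w" by auto
  have "connected (delete_vertex G w)" using tc w by (simp add: two_connected_def)
  then have "(\<lambda>a b. adj (delete_vertex G w) a b \<and> a \<in> verts (delete_vertex G w)
      \<and> b \<in> verts (delete_vertex G w))\<^sup>*\<^sup>* v x"
    using v x w unfolding connected_def by (auto simp: delete_vertex_def verts_def)
  then show False
  proof (cases rule: converse_rtranclpE)
    case (step y)
    then have "y \<in> neighbours G v" "y \<noteq> w"
      by (auto simp: delete_vertex_def verts_def adj_def neighbours_def)
    then show ?thesis using w by auto
  qed (use x in simp)
qed

section \<open>Joins with a relabelled induced subgraph\<close>

definition induced_copy :: "'a graph \<Rightarrow> (nat \<Rightarrow> 'a) \<Rightarrow> nat \<Rightarrow> nat graph" where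
  "induced_copy G h d = ({0..<d}, \<lambda>i j. i < d \<and> j < d \<and> adj G (h i) (h j))"

lemma simple_graph_induced_copy: "simple_graph G \<Longrightarrow> simple_graph (induced_copy G h d)"
  by (auto simp: simple_graph_def induced_copy_def verts_def adj_def)

lemma card_verts_induced_copy [simp]: "card (verts (induced_copy G h d)) = d"
  by (simp add: induced_copy_def verts_def)

lemma free_of_complete_graph_induced_copy:
  assumes sg: "simple_graph G" and h: "inj_on h {0..<d}" "h ` {0..<d} \<subseteq> verts G"
    and u: "u \<in> verts G" "u \<notin> h ` {0..<d}" "\<forall>i<d. adj G u (h i)"
    and free: "free_of (complete_graph m) G"
  shows "free_of (complete_graph (m - 1)) (induced_copy G h d)"
  unfolding free_of_def
proof
  assume "subgraph_of (complete_graph (m - 1)) (induced_copy G h d)"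
  then obtain \<phi> where \<phi>: "inj_on \<phi> {0..<m - 1}" "\<phi> ` {0..<m - 1} \<subseteq> {0..<d}"
    "\<And>i j. i < m - 1 \<Longrightarrow> j < m - 1 \<Longrightarrow> i \<noteq> j \<Longrightarrow> adj G (h (\<phi> i)) (h (\<phi> j))"
    unfolding subgraph_of_def by (auto simp: complete_graph_def induced_copy_def verts_def adj_def)
  have "m \<noteq> 0" using free not_free_of_complete_graph_0[of G] by (cases "m = 0") auto
  have \<phi>_range: "\<And>i. i < m - 1 \<Longrightarrow> \<phi> i < d"
    using \<phi>(2) by (meson atLeastLessThan_iff image_subset_iff zero_le)
  define \<psi> where "\<psi> i = (if i < m - 1 then h (\<phi> i) else u)" for i
  have "inj_on \<psi> {0..<m}"
  proof (rule inj_onI)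
    fix i j assume "i \<in> {0..<m}" "j \<in> {0..<m}" "\<psi> i = \<psi> j"
    then show "i = j"
    proof (cases "i < m - 1 \<and> j < m - 1")
      case True
      then have "\<phi> i = \<phi> j"
        using \<open>\<psi> i = \<psi> j\<close> h(1) \<phi>_range unfolding \<psi>_def inj_on_def by auto
      then show ?thesis using True \<phi>(1) unfolding inj_on_def by auto
    next
      case False
      then show ?thesis
        using \<open>\<psi> i = \<psi> j\<close> \<open>i \<in> {0..<m}\<close> \<open>j \<in> {0..<m}\<close> u(2) \<phi>_range
        unfolding \<psi>_def by (auto split: if_splits)
    qed
  qed
  moreover have "\<psi> ` {0..<m} \<subseteq> verts G"
    using \<phi>_range h(2) u(1) by (auto simp: \<psi>_def)
  moreover have "adj G (\<psi> i) (\<psi> j)" if "i < m" "j < m" "i \<noteq> j" for i j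
  proof -
    have "adj G u (\<psi> i)" if "i < m - 1" for i
      using that u(3) \<phi>_range[OF that] unfolding \<psi>_def by simp
    then show ?thesis
      using \<open>i < m\<close> \<open>j < m\<close> \<open>i \<noteq> j\<close> \<phi>(3) simple_graph_adj_sym[OF sg]
      unfolding \<psi>_def by (cases "i < m - 1"; cases "j < m - 1") (auto split: if_splits)
  qed
  ultimately have "subgraph_of (complete_graph m) G"
    unfolding subgraph_of_def by (auto simp: complete_graph_def verts_def adj_def)
  then show False using free by (simp add: free_of_def)
qed

lemma subgraph_of_join_induced_copy:
  assumes h: "bij_betw h {0..<d} S" and S: "S \<subseteq> verts G"
    and g: "inj_on g (verts G - S)" "g ` (verts G - S) \<subseteq> verts T"
    and g_adj: "\<And>a b. a \<in> verts G - S \<Longrightarrow> b \<in> verts G - S \<Longrightarrow> adj G a b \<Longrightarrow> adj T (g a) (g b)"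
  shows "subgraph_of G (graph_join (induced_copy G h d) T)"
  unfolding subgraph_of_def
proof (intro exI conjI)
  let ?h' = "inv_into {0..<d} h"
  have h': "\<And>v. v \<in> S \<Longrightarrow> ?h' v < d \<and> h (?h' v) = v"
    using h by (auto simp: bij_betw_def inv_into_into f_inv_into_f)
  define f where "f v = (if v \<in> S then Inl (?h' v) else Inr (g v))" for v
  show "inj_on f (verts G)"
  proof (rule inj_onI)
    fix a b assume ab: "a \<in> verts G" "b \<in> verts G" "f a = f b"
    show "a = b"
    proof (cases "a \<in> S \<and> b \<in> S")
      case True
      then show ?thesis using ab(3) h' by (metis f_def sum.inject(1))
    next
      case False
      then show ?thesis using ab inj_onD[OF g(1)] by (auto simp: f_def split: if_splits)
    qed
  qed
  show "f ` verts G \<subseteq> verts (graph_join (induced_copy G h d) T)"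
    using g(2) h' by (auto simp: f_def graph_join_def induced_copy_def verts_def)
  show "\<forall>a\<in>verts G. \<forall>b\<in>verts G. adj G a b \<longrightarrow> adj (graph_join (induced_copy G h d) T) (f a) (f b)"
    using g(2) h' g_adj
    by (auto simp: f_def graph_join_def induced_copy_def verts_def adj_def)
qed

lemma subgraph_of_join_edgeless:
  assumes sg: "simple_graph G" and h: "bij_betw h {0..<d} S" and S: "S \<subseteq> verts G"
    and n: "card (verts G) = n"
    and indep: "\<And>a b. a \<in> verts G - S \<Longrightarrow> b \<in> verts G - S \<Longrightarrow> \<not> adj G a b"
  shows "subgraph_of G (graph_join (induced_copy G h d) (edgeless_graph (n - d)))"
proof -
  have fin: "finite (verts G)" using sg by (rule simple_graph_finite)
  have "card (verts G - S) = n - d"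
    using S fin n bij_betw_same_card[OF h] by (simp add: card_Diff_subset finite_subset)
  then obtain g where "bij_betw g (verts G - S) {0..<n - d}"
    using ex_bij_betw_finite_nat[of "verts G - S"] fin by auto
  then show ?thesis
    using indep by (intro subgraph_of_join_induced_copy[OF h S])
      (auto simp: bij_betw_def edgeless_graph_def verts_def)
qed

lemma subgraph_of_join_edgeless_K2:
  assumes sg: "simple_graph G" and h: "bij_betw h {0..<d} S" and S: "S \<subseteq> verts G"
    and n: "card (verts G) = n"
    and xy: "x \<in> verts G - S" "y \<in> verts G - S" "x \<noteq> y"
    and one_edge: "\<And>a b. a \<in> verts G - S \<Longrightarrow> b \<in> verts G - S \<Longrightarrow> adj G a b \<Longrightarrow> {a, b} = {x, y}"
  shows "subgraph_of G (graph_join (induced_copy G h d)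
           (disj_union (edgeless_graph (n - d - 2)) (complete_graph 2)))"
proof -
  let ?W = "verts G - S - {x, y}"
  have fin: "finite (verts G)" using sg by (rule simple_graph_finite)
  have "card ?W = n - d - 2"
    using S fin n bij_betw_same_card[OF h] xy
    by (simp add: card_Diff_subset finite_subset card_Diff_subset_Int)
  then obtain w where w: "bij_betw w ?W {0..<n - d - 2}"
    using ex_bij_betw_finite_nat[of ?W] fin by auto
  define g where "g v = (if v = x then Inr (0::nat) else if v = y then Inr 1 else Inl (w v))" for v
  let ?T = "disj_union (edgeless_graph (n - d - 2)) (complete_graph 2)"
  show ?thesis
  proof (rule subgraph_of_join_induced_copy[OF h S])
    show "inj_on g (verts G - S)"
    proof (rule inj_onI)
      fix a b assume ab: "a \<in> verts G - S" "b \<in> verts G - S" "g a = g b"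
      show "a = b"
      proof (cases "a \<in> {x, y} \<or> b \<in> {x, y}")
        case True
        then show ?thesis using ab(3) xy(3) by (auto simp: g_def split: if_splits)
      next
        case False
        then show ?thesis using ab inj_onD[OF bij_betw_imp_inj_on[OF w]] by (simp add: g_def)
      qed
    qed
    show "g ` (verts G - S) \<subseteq> verts ?T"
      using bij_betwE[OF w]
      by (auto simp: g_def disj_union_def edgeless_graph_def complete_graph_def verts_def)
    have "adj ?T (Inr 0) (Inr 1)" "adj ?T (Inr 1) (Inr 0)"
      by (simp_all add: disj_union_def complete_graph_def adj_def)
    moreover fix a b assume "a \<in> verts G - S" "b \<in> verts G - S" "adj G a b"
    then have "(a = x \<and> b = y) \<or> (a = y \<and> b = x)"
      using one_edge simple_graph_no_loop[OF sg] by (metis doubleton_eq_iff)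
    ultimately show "adj ?T (g a) (g b)" using xy(3) by (auto simp: g_def)
  qed
qed

lemma exists_join_decomposition:
  assumes sg: "simple_graph G" and free: "free_of (complete_graph m) G" and n: "card (verts G) = n"
    and u0: "u0 \<in> verts G" and card: "card (neighbours G u0) = d"
    and xy: "x \<in> verts G - neighbours G u0" "y \<in> verts G - neighbours G u0" "x \<noteq> y"
    and edges: "\<And>a b. a \<in> verts G - neighbours G u0 \<Longrightarrow> b \<in> verts G - neighbours G u0 \<Longrightarrow> adj G a b
      \<Longrightarrow> odd k \<and> {a, b} = {x, y}"
  shows "\<exists>H :: nat graph. simple_graph H \<and> card (verts H) = d \<and>
           free_of (complete_graph (m - 1)) H \<and>
           (if even k then subgraph_of G (graph_join H (edgeless_graph (n - d)))
            else subgraph_of G (graph_join H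
                   (disj_union (edgeless_graph (n - d - 2)) (complete_graph 2))))"
proof -
  have S: "neighbours G u0 \<subseteq> verts G" by (auto simp: neighbours_def)
  obtain h where h: "bij_betw h {0..<d} (neighbours G u0)"
    using ex_bij_betw_nat_finite[of "neighbours G u0"] card finite_subset[OF S simple_graph_finite[OF sg]]
    by auto
  have "free_of (complete_graph (m - 1)) (induced_copy G h d)"
    using h u0 free simple_graph_no_loop[OF sg]
    by (intro free_of_complete_graph_induced_copy[OF sg]) (auto simp: bij_betw_def neighbours_def)
  moreover have "if even k then subgraph_of G (graph_join (induced_copy G h d) (edgeless_graph (n - d)))
      else subgraph_of G (graph_join (induced_copy G h d)
             (disj_union (edgeless_graph (n - d - 2)) (complete_graph 2)))"
  proof (cases "even k")
    case True
    then have "\<not> adj G a b" if "a \<in> verts G - neighbours G u0" "b \<in> verts G - neighbours G u0" for a b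
      using edges[OF that] by blast
    then show ?thesis using True subgraph_of_join_edgeless[OF sg h S n] by simp
  next
    case False
    have "{a, b} = {x, y}"
      if "a \<in> verts G - neighbours G u0" "b \<in> verts G - neighbours G u0" "adj G a b" for a b
      using edges[OF that] by blast
    then show ?thesis using False subgraph_of_join_edgeless_K2[OF sg h S n xy] by simp
  qed
  ultimately show ?thesis using simple_graph_induced_copy[OF sg] card_verts_induced_copy by blast
qed

section \<open>Sets of naturals without consecutive elements\<close>

definition parity_switch :: "nat \<Rightarrow> nat \<Rightarrow> nat set" where
  "parity_switch t j =
     {x. even x \<and> 2 \<le> x \<and> x \<le> 2 * j} \<union> {x. odd x \<and> 2 * j + 3 \<le> x \<and> x \<le> 2 * t - 1}"

lemma mem_parity_switch_iff:
  "x \<in> parity_switch t j \<longleftrightarrow>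
     even x \<and> 2 \<le> x \<and> x \<le> 2 * j \<or> odd x \<and> 2 * j + 3 \<le> x \<and> x \<le> 2 * t - 1"
  by (simp add: parity_switch_def)

lemma inj_on_div_2_nonconsecutive:
  assumes "\<And>x. x \<in> A \<Longrightarrow> Suc x \<notin> A"
  shows "inj_on (\<lambda>x::nat. x div 2) A"
proof (rule inj_onI)
  fix x y assume "x \<in> A" "y \<in> A" "x div 2 = y div 2"
  moreover from \<open>x div 2 = y div 2\<close> have "x = y \<or> y = Suc x \<or> x = Suc y" by presburger
  ultimately show "x = y" using assms by blast
qed

lemma card_nonconsecutive_le:
  assumes range: "\<And>x. x \<in> A \<Longrightarrow> 2 \<le> x \<and> x < p" and nc: "\<And>x. x \<in> A \<Longrightarrow> Suc x \<notin> A"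
  shows "card A \<le> (p - 1) div 2"
proof -
  have "card A = card ((\<lambda>x. x div 2) ` A)"
    using inj_on_div_2_nonconsecutive[OF nc] by (simp add: card_image)
  also have "\<dots> \<le> card {1..(p - 1) div 2}"
  proof (rule card_mono)
    have "1 \<le> x div 2 \<and> x div 2 \<le> (p - 1) div 2" if "x \<in> A" for x
      using range[OF that] by presburger
    then show "(\<lambda>x. x div 2) ` A \<subseteq> {1..(p - 1) div 2}" by auto
  qed simp
  finally show ?thesis by simp
qed

lemma downward_closed_eq_atLeastAtMost:
  fixes J :: "nat set"
  assumes sub: "J \<subseteq> {1..T}" and closed: "\<And>i. Suc i \<in> J \<Longrightarrow> 1 \<le> i \<Longrightarrow> i \<in> J"
  obtains j where "j \<le> T" "J = {1..j}"
proof (cases "J = {}")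
  case True
  then show ?thesis using that[of 0] by simp
next
  case False
  have fin: "finite J" using sub finite_subset by blast
  have "i \<in> J" if "1 \<le> i" "i \<le> Max J" for i
    using that(2,1)
  proof (induction rule: inc_induct)
    case base
    then show ?case using Max_in[OF fin False] by blast
  next
    case (step i)
    then show ?case using closed by simp
  qed
  then have "J = {1..Max J}" using Max_ge[OF fin] sub by fastforce
  moreover have "Max J \<le> T" using Max_in[OF fin False] sub by auto
  ultimately show ?thesis using that by blast
qed

lemma nonconsecutive_meets_pairs:
  assumes range: "\<And>x. x \<in> A \<Longrightarrow> 2 \<le> x \<and> x < p" and nc: "\<And>x. x \<in> A \<Longrightarrow> Suc x \<notin> A"
    and large: "t - 1 \<le> card A" and p: "p \<le> 2 * t" and i: "1 \<le> i" "i \<le> t - 1"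
  shows "2 * i \<in> A \<or> 2 * i + 1 \<in> A"
proof -
  have halves: "(\<lambda>x. x div 2) ` A = {1..t - 1}"
  proof (rule card_seteq)
    have "1 \<le> x div 2 \<and> x div 2 \<le> t - 1" if "x \<in> A" for x
      using range[OF that] p by presburger
    then show "(\<lambda>x. x div 2) ` A \<subseteq> {1..t - 1}" by auto
    show "card {1..t - 1} \<le> card ((\<lambda>x. x div 2) ` A)"
      using large inj_on_div_2_nonconsecutive[OF nc] by (simp add: card_image)
  qed simp
  then have "i \<in> (\<lambda>x. x div 2) ` A" using i by simp
  then obtain x where "x \<in> A" "x div 2 = i" by blast
  moreover from \<open>x div 2 = i\<close> have "x = 2 * i \<or> x = 2 * i + 1" by presburger
  ultimately show ?thesis by auto
qed

lemma nonconsecutive_eq_parity_switch: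
  assumes range: "\<And>x. x \<in> A \<Longrightarrow> 2 \<le> x \<and> x < p" and nc: "\<And>x. x \<in> A \<Longrightarrow> Suc x \<notin> A"
    and large: "t - 1 \<le> card A" and p: "1 \<le> p" "p \<le> 2 * t"
  obtains j where "j \<le> t - 1" "A = parity_switch t j" "2 * t - 1 \<le> p" "p = 2 * t - 1 \<Longrightarrow> j = t - 1"
proof -
  have "t - 1 \<le> (p - 1) div 2" using large card_nonconsecutive_le[OF range nc] by linarith
  then have p_lower: "2 * t - 1 \<le> p" using p by linarith
  note pair = nonconsecutive_meets_pairs[OF range nc large p(2)]
  obtain j where j: "j \<le> t - 1" "{i. 2 * i \<in> A} = {1..j}"
  proof (rule downward_closed_eq_atLeastAtMost)
    show "{i. 2 * i \<in> A} \<subseteq> {1..t - 1}"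
      using range p by fastforce
    fix i assume "Suc i \<in> {i. 2 * i \<in> A}" "1 \<le> i"
    moreover have "i \<le> t - 1" using calculation range p by fastforce
    ultimately show "i \<in> {i. 2 * i \<in> A}" using pair[of i] nc by fastforce
  qed
  have even_mem: "2 * i \<in> A \<longleftrightarrow> 1 \<le> i \<and> i \<le> j" for i
    using j(2) by (simp add: set_eq_iff)
  have odd_mem: "2 * i + 1 \<in> A \<longleftrightarrow> j < i \<and> i \<le> t - 1" for i
  proof
    assume "2 * i + 1 \<in> A"
    then show "j < i \<and> i \<le> t - 1"
      using range[of "2 * i + 1"] p nc[of "2 * i"] even_mem[of i] by auto
  next
    assume "j < i \<and> i \<le> t - 1"
    then show "2 * i + 1 \<in> A" using pair[of i] even_mem[of i] by auto
  qed
  have "A = parity_switch t j"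
  proof (intro set_eqI)
    fix x :: nat
    consider i where "x = 2 * i" | i where "x = Suc (2 * i)" by (metis oddE evenE Suc_eq_plus1)
    then show "x \<in> A \<longleftrightarrow> x \<in> parity_switch t j"
      by cases (auto simp: parity_switch_def even_mem odd_mem[simplified])
  qed
  moreover have "j = t - 1" if "p = 2 * t - 1"
    using odd_mem[of "t - 1"] range[of "2 * (t - 1) + 1"] that j(1) by linarith
  ultimately show ?thesis using that j(1) p_lower by blast
qed

section \<open>Rerouting a maximal path\<close>

lemma successively_upt:
  "(\<And>i. a \<le> i \<Longrightarrow> Suc i < b \<Longrightarrow> R i (Suc i)) \<Longrightarrow> successively R [a..<b]"
  by (auto simp: successively_conv_nth)

lemma successively_rev_upt:
  "(\<And>i. a \<le> i \<Longrightarrow> Suc i < b \<Longrightarrow> R (Suc i) i) \<Longrightarrow> successively R (rev [a..<b])"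
  unfolding successively_rev by (rule successively_upt)

lemma successively_append:
  "successively R xs \<Longrightarrow> successively R ys \<Longrightarrow> (xs \<noteq> [] \<Longrightarrow> ys \<noteq> [] \<Longrightarrow> R (last xs) (hd ys))
    \<Longrightarrow> successively R (xs @ ys)"
  by (auto simp: successively_append_iff)

lemma successively_singleton: "successively R [x]"
  by simp

text \<open>Rerouting a path \<open>P\<close> through two further vertices \<open>u\<close> and \<open>u'\<close> is described by a list
  of indices: \<open>0\<close> stands for \<open>u\<close>, \<open>i \<in> {1..|P|}\<close> for the \<open>i\<close>-th vertex of \<open>P\<close> (counted from
  \<open>1\<close>) and \<open>|P| + 1\<close> for \<open>u'\<close>.\<close>

definition route_vertex :: "'a list \<Rightarrow> 'a \<Rightarrow> 'a \<Rightarrow> nat \<Rightarrow> 'a" where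
  "route_vertex P u u' i = (if i = 0 then u else if i \<le> length P then P ! (i - 1) else u')"

\<comment> \<open>otherwise simp rewrites \<open>[a..<Suc b]\<close> to \<open>[a..<b] @ [b]\<close> inside the index lists of routes\<close>
declare upt_Suc [simp del]

locale maximal_path =
  fixes G :: "'a graph" and P :: "'a list"
  assumes simple: "simple_graph G" and path: "is_path G P"
    and maximal: "\<And>Q. is_path G Q \<Longrightarrow> set P \<subseteq> set Q \<Longrightarrow> length Q \<le> length P"
begin

abbreviation route_adj :: "'a \<Rightarrow> 'a \<Rightarrow> nat \<Rightarrow> nat \<Rightarrow> bool" where
  "route_adj u u' i j \<equiv> adj G (route_vertex P u u' i) (route_vertex P u u' j)"

definition nbr_positions :: "'a \<Rightarrow> nat set" where
  "nbr_positions u = {i. 1 \<le> i \<and> i \<le> length P \<and> adj G u (P ! (i - 1))}"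

lemma nth_path_eq_iff:
  assumes "1 \<le> i" "i \<le> length P" "1 \<le> i'" "i' \<le> length P"
  shows "P ! (i - 1) = P ! (i' - 1) \<longleftrightarrow> i = i'"
  using assms path nth_eq_iff_index_eq[of P "i - 1" "i' - 1"] unfolding is_path_def by auto

lemma nth_path_mem_neighbours_iff:
  "1 \<le> i \<Longrightarrow> i \<le> length P \<Longrightarrow> P ! (i - 1) \<in> neighbours G u \<longleftrightarrow> i \<in> nbr_positions u"
  using path by (auto simp: neighbours_def nbr_positions_def is_path_def)

lemma inj_on_route_vertex:
  assumes u: "u \<in> verts G - set P" and u': "u' \<in> verts G - set P"
    and I: "I \<subseteq> {0..Suc (length P)}" "u = u' \<Longrightarrow> Suc (length P) \<notin> I"
  shows "inj_on (route_vertex P u u') I"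
proof (rule inj_onI)
  fix i j assume ij: "i \<in> I" "j \<in> I" "route_vertex P u u' i = route_vertex P u u' j"
  have kind: "x = 0 \<and> route_vertex P u u' x = u
      \<or> 1 \<le> x \<and> x \<le> length P \<and> route_vertex P u u' x \<in> set P
      \<or> x = Suc (length P) \<and> route_vertex P u u' x = u'" if "x \<in> I" for x
  proof -
    have "x \<le> Suc (length P)" using that I(1) by auto
    then show ?thesis by (cases "x = 0"; cases "x = Suc (length P)") (auto simp: route_vertex_def)
  qed
  show "i = j"
  proof (cases "1 \<le> i \<and> i \<le> length P \<and> 1 \<le> j \<and> j \<le> length P")
    case True
    then show ?thesis using ij(3) nth_path_eq_iff by (simp add: route_vertex_def)
  next
    case False
    then show ?thesis using kind[OF ij(1)] kind[OF ij(2)] ij I(2) u u' by auto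
  qed
qed

lemma is_path_route:
  assumes u: "u \<in> verts G - set P" and u': "u' \<in> verts G - set P"
    and idx: "idx \<noteq> []" "distinct idx" "set idx \<subseteq> {0..Suc (length P)}"
      "u = u' \<Longrightarrow> Suc (length P) \<notin> set idx"
    and steps: "successively (route_adj u u') idx"
  shows "is_path G (map (route_vertex P u u') idx)"
proof -
  have "route_vertex P u u' i \<in> verts G" if "i \<le> Suc (length P)" for i
    using that u u' path unfolding route_vertex_def is_path_def by auto
  then have "set (map (route_vertex P u u') idx) \<subseteq> verts G" using idx(3) by auto
  moreover have "distinct (map (route_vertex P u u') idx)"
    using idx(2) inj_on_route_vertex[OF u u' idx(3,4)] by (simp add: distinct_map)
  ultimately show ?thesis
    using idx(1) steps by (simp add: is_path_iff_successively successively_map)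
qed

lemma no_extending_route:
  assumes u: "u \<in> verts G - set P" and u': "u' \<in> verts G - set P"
    and idx: "distinct idx" "{1..length P} \<subseteq> set idx" "set idx \<subseteq> {0..Suc (length P)}"
      "u = u' \<Longrightarrow> Suc (length P) \<notin> set idx" "length P < length idx"
    and steps: "successively (route_adj u u') idx"
  shows False
proof -
  have "set P \<subseteq> set (map (route_vertex P u u') idx)"
  proof
    fix v assume "v \<in> set P"
    then obtain i where "i < length P" "v = P ! i" by (auto simp: in_set_conv_nth)
    then have "Suc i \<in> set idx" "v = route_vertex P u u' (Suc i)"
      using idx(2) by (auto simp: route_vertex_def)
    then show "v \<in> set (map (route_vertex P u u') idx)" by simp
  qed
  moreover have "idx \<noteq> []" using idx(5) by auto
  ultimately show False
    using maximal[OF is_path_route[OF u u' _ idx(1,3,4) steps]] idx(5) by simp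
qed

lemma no_extending_route_single:
  assumes u: "u \<in> verts G - set P"
    and idx: "distinct idx" "set idx = {0..length P}" and steps: "successively (route_adj u u) idx"
  shows False
proof (rule no_extending_route[OF u u _ _ _ _ _ steps])
  show "length P < length idx" using distinct_card[OF idx(1)] idx(2) by simp
qed (use idx in auto)

lemma no_extending_route_pair:
  assumes u: "u \<in> verts G - set P" and u': "u' \<in> verts G - set P" "u \<noteq> u'"
    and idx: "distinct idx" "set idx = {0..Suc (length P)}" and steps: "successively (route_adj u u') idx"
  shows False
proof (rule no_extending_route[OF u u'(1) _ _ _ _ _ steps])
  show "length P < length idx" using distinct_card[OF idx(1)] idx(2) by simp
qed (use idx u' in auto)

lemma no_long_route:
  assumes u: "u \<in> verts G - set P" and u': "u' \<in> verts G - set P" "u \<noteq> u'"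
    and idx: "distinct idx" "set idx \<subseteq> {0..Suc (length P)}" "k \<le> length idx" "idx \<noteq> []"
    and free: "free_of (path_graph k) G"
    and steps: "successively (route_adj u u') idx"
  shows False
  using subgraph_of_path_graph[OF simple is_path_route[OF u u'(1) idx(4,1,2) _ steps]] idx(3) u'(2) free
  by (simp add: free_of_def)

lemma route_adj_Suc:
  assumes "1 \<le> i" "i < length P"
  shows "route_adj u u' i (Suc i) \<and> route_adj u u' (Suc i) i"
proof -
  obtain i' where i': "i = Suc i'" using assms(1) by (cases i) auto
  then have "adj G (P ! i') (P ! i)" using path assms(2) unfolding is_path_def by simp
  then show ?thesis using i' assms(2) simple_graph_adj_sym[OF simple] by (auto simp: route_vertex_def)
qed

lemma route_adj_first_iff:
  "1 \<le> i \<Longrightarrow> i \<le> length P \<Longrightarrow>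
    (route_adj u u' 0 i \<longleftrightarrow> i \<in> nbr_positions u) \<and> (route_adj u u' i 0 \<longleftrightarrow> i \<in> nbr_positions u)"
  using simple_graph_adj_sym[OF simple] by (auto simp: route_vertex_def nbr_positions_def)

lemma route_adj_last_iff:
  "1 \<le> i \<Longrightarrow> i \<le> length P \<Longrightarrow>
    (route_adj u u' (Suc (length P)) i \<longleftrightarrow> i \<in> nbr_positions u') \<and>
    (route_adj u u' i (Suc (length P)) \<longleftrightarrow> i \<in> nbr_positions u')"
  using simple_graph_adj_sym[OF simple] by (auto simp: route_vertex_def nbr_positions_def)

lemma route_adj_chord:
  "1 \<le> a \<Longrightarrow> a \<le> length P \<Longrightarrow> 1 \<le> b \<Longrightarrow> b \<le> length P \<Longrightarrow> adj G (P ! (a - 1)) (P ! (b - 1))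
    \<Longrightarrow> route_adj u u' a b \<and> route_adj u u' b a"
  using simple_graph_adj_sym[OF simple] by (auto simp: route_vertex_def)

lemma nbr_positions_not_first:
  assumes u: "u \<in> verts G - set P"
  shows "1 \<notin> nbr_positions u"
proof
  assume nbr: "1 \<in> nbr_positions u"
  let ?idx = "[0] @ [1..<Suc (length P)]"
  have p: "1 \<le> length P" using nbr by (auto simp: nbr_positions_def)
  have "successively (route_adj u u) ?idx"
  proof (intro successively_append successively_upt successively_singleton)
    fix i assume "1 \<le> i" "Suc i < Suc (length P)"
    then show "route_adj u u i (Suc i)" using route_adj_Suc by auto
  next
    show "route_adj u u (last [0]) (hd [1..<Suc (length P)])"
      using p nbr route_adj_first_iff[of 1 u u] by (subst hd_upt) auto
  qed
  moreover have "distinct ?idx" "set ?idx = {0..length P}" by (auto simp: set_upt)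
  ultimately show False using no_extending_route_single[OF u] by blast
qed

lemma nbr_positions_not_last:
  assumes u: "u \<in> verts G - set P"
  shows "length P \<notin> nbr_positions u"
proof
  assume nbr: "length P \<in> nbr_positions u"
  let ?idx = "[1..<Suc (length P)] @ [0]"
  have p: "1 \<le> length P" using nbr by (auto simp: nbr_positions_def)
  have "successively (route_adj u u) ?idx"
  proof (intro successively_append successively_upt successively_singleton)
    fix i assume "1 \<le> i" "Suc i < Suc (length P)"
    then show "route_adj u u i (Suc i)" using route_adj_Suc by auto
  next
    show "route_adj u u (last [1..<Suc (length P)]) (hd [0])"
      using p nbr route_adj_first_iff[of "length P" u u] by (subst last_upt) auto
  qed
  moreover have "distinct ?idx" "set ?idx = {0..length P}" by (auto simp: set_upt)
  ultimately show False using no_extending_route_single[OF u] by blast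
qed

lemma nbr_positions_nonconsecutive:
  assumes u: "u \<in> verts G - set P" and nbr: "i \<in> nbr_positions u"
  shows "Suc i \<notin> nbr_positions u"
proof
  assume nbr': "Suc i \<in> nbr_positions u"
  let ?idx = "[1..<Suc i] @ [0] @ [Suc i..<Suc (length P)]"
  have i: "1 \<le> i" "Suc i \<le> length P" using nbr nbr' by (auto simp: nbr_positions_def)
  have "successively (route_adj u u) ?idx"
  proof (intro successively_append successively_upt successively_singleton)
    fix j assume "1 \<le> j" "Suc j < Suc i"
    then show "route_adj u u j (Suc j)" using route_adj_Suc i by auto
  next
    fix j assume "Suc i \<le> j" "Suc j < Suc (length P)"
    then show "route_adj u u j (Suc j)" using route_adj_Suc i by auto
  next
    show "route_adj u u (last [0]) (hd [Suc i..<Suc (length P)])"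
      using i nbr' route_adj_first_iff[of "Suc i" u u] by simp
  next
    show "route_adj u u (last [1..<Suc i]) (hd ([0] @ [Suc i..<Suc (length P)]))"
      using i nbr route_adj_first_iff[of i u u] by simp
  qed
  moreover have "distinct ?idx" "set ?idx = {0..length P}" using i by (auto simp: set_upt)
  ultimately show False using no_extending_route_single[OF u] by blast
qed

lemma nbr_positions_range:
  assumes u: "u \<in> verts G - set P" and x: "x \<in> nbr_positions u"
  shows "2 \<le> x \<and> x < length P"
proof -
  have "x \<noteq> 1" "x \<noteq> length P"
    using x nbr_positions_not_first[OF u] nbr_positions_not_last[OF u] by auto
  with x show ?thesis by (auto simp: nbr_positions_def)
qed

lemma card_nbr_positions_le:
  "u \<in> verts G - set P \<Longrightarrow> card (nbr_positions u) \<le> (length P - 1) div 2"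
  by (rule card_nonconsecutive_le) (use nbr_positions_range nbr_positions_nonconsecutive in auto)

lemma no_chord_to_successors:
  assumes u: "u \<in> verts G - set P"
    and ab: "1 \<le> a" "a < b" "b \<le> length P" and chord: "adj G (P ! (a - 1)) (P ! (b - 1))"
    and nbrs: "Suc a \<in> nbr_positions u" "b = length P \<or> Suc b \<in> nbr_positions u"
  shows False
proof -
  let ?idx = "[1..<Suc a] @ rev [Suc a..<Suc b] @ [0] @ [Suc b..<Suc (length P)]"
  have "successively (route_adj u u) ?idx"
  proof (intro successively_append successively_upt successively_rev_upt successively_singleton)
    fix i assume "1 \<le> i" "Suc i < Suc a"
    then show "route_adj u u i (Suc i)" using route_adj_Suc ab by auto
  next
    fix i assume "Suc a \<le> i" "Suc i < Suc b"
    then show "route_adj u u (Suc i) i" using route_adj_Suc ab by auto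
  next
    fix i assume "Suc b \<le> i" "Suc i < Suc (length P)"
    then show "route_adj u u i (Suc i)" using route_adj_Suc ab by auto
  next
    assume "[0] \<noteq> []" "[Suc b..<Suc (length P)] \<noteq> []"
    then show "route_adj u u (last [0]) (hd [Suc b..<Suc (length P)])"
      using nbrs(2) route_adj_first_iff[of "Suc b" u u] ab by auto
  next
    show "route_adj u u (last (rev [Suc a..<Suc b])) (hd ([0] @ [Suc b..<Suc (length P)]))"
      using ab nbrs(1) route_adj_first_iff[of "Suc a" u u] by (simp add: last_rev)
  next
    show "route_adj u u (last [1..<Suc a]) (hd (rev [Suc a..<Suc b] @ [0] @ [Suc b..<Suc (length P)]))"
      using ab chord route_adj_chord[of a b u u] by (simp add: hd_rev)
  qed
  moreover have "distinct ?idx" "set ?idx = {0..length P}" using ab by (auto simp: set_upt)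
  ultimately show False using no_extending_route_single[OF u] by blast
qed

lemma no_chord_to_predecessors:
  assumes u: "u \<in> verts G - set P"
    and ab: "1 \<le> a" "a < b" "b \<le> length P" and chord: "adj G (P ! (a - 1)) (P ! (b - 1))"
    and nbrs: "b - 1 \<in> nbr_positions u" "a = 1 \<or> a - 1 \<in> nbr_positions u"
  shows False
proof -
  let ?idx = "rev [b..<Suc (length P)] @ [a..<b] @ [0] @ rev [1..<a]"
  have "successively (route_adj u u) ?idx"
  proof (intro successively_append successively_upt successively_rev_upt successively_singleton)
    fix i assume "b \<le> i" "Suc i < Suc (length P)"
    then show "route_adj u u (Suc i) i" using route_adj_Suc ab by auto
  next
    fix i assume "a \<le> i" "Suc i < b"
    then show "route_adj u u i (Suc i)" using route_adj_Suc ab by auto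
  next
    fix i assume "1 \<le> i" "Suc i < a"
    then show "route_adj u u (Suc i) i" using route_adj_Suc ab by auto
  next
    assume "[0] \<noteq> []" "rev [1..<a] \<noteq> []"
    then show "route_adj u u (last [0]) (hd (rev [1..<a]))"
      using nbrs(2) route_adj_first_iff[of "a - 1" u u] ab by (auto simp: hd_rev)
  next
    show "route_adj u u (last [a..<b]) (hd ([0] @ rev [1..<a]))"
      using ab nbrs(1) route_adj_first_iff[of "b - 1" u u] by simp
  next
    show "route_adj u u (last (rev [b..<Suc (length P)])) (hd ([a..<b] @ [0] @ rev [1..<a]))"
      using ab chord route_adj_chord[of a b u u] by (simp add: last_rev)
  qed
  moreover have "distinct ?idx" "set ?idx = {0..length P}" using ab by (auto simp: set_upt)
  ultimately show False using no_extending_route_single[OF u] by blast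
qed

lemma no_interleaved_nbrs:
  assumes u: "u \<in> verts G - set P" and u': "u' \<in> verts G - set P" "u \<noteq> u'"
    and c: "c < c'" "c' < length P"
    and nbrs: "c \<in> nbr_positions u'" "c' \<in> nbr_positions u'"
      "Suc c \<in> nbr_positions u" "Suc c' \<in> nbr_positions u"
  shows False
proof -
  let ?idx = "[1..<Suc c] @ [Suc (length P)] @ rev [Suc c..<Suc c'] @ [0] @ [Suc c'..<Suc (length P)]"
  have c1: "1 \<le> c" using nbrs(1) by (auto simp: nbr_positions_def)
  have "successively (route_adj u u') ?idx"
  proof (intro successively_append successively_upt successively_rev_upt successively_singleton)
    fix i assume "1 \<le> i" "Suc i < Suc c"
    then show "route_adj u u' i (Suc i)" using route_adj_Suc c by auto
  next
    fix i assume "Suc c \<le> i" "Suc i < Suc c'"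
    then show "route_adj u u' (Suc i) i" using route_adj_Suc c by auto
  next
    fix i assume "Suc c' \<le> i" "Suc i < Suc (length P)"
    then show "route_adj u u' i (Suc i)" using route_adj_Suc c by auto
  next
    show "route_adj u u' (last [0]) (hd [Suc c'..<Suc (length P)])"
      using c nbrs route_adj_first_iff[of "Suc c'" u u'] by (subst hd_upt) auto
  next
    show "route_adj u u' (last (rev [Suc c..<Suc c'])) (hd ([0] @ [Suc c'..<Suc (length P)]))"
      using c nbrs route_adj_first_iff[of "Suc c" u u'] by (simp add: last_rev)
  next
    show "route_adj u u' (last [Suc (length P)])
        (hd (rev [Suc c..<Suc c'] @ [0] @ [Suc c'..<Suc (length P)]))"
      using c c1 nbrs route_adj_last_iff[of c' u u'] by (simp add: hd_rev)
  next
    show "route_adj u u' (last [1..<Suc c])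
        (hd ([Suc (length P)] @ rev [Suc c..<Suc c'] @ [0] @ [Suc c'..<Suc (length P)]))"
      using c c1 nbrs route_adj_last_iff[of c u u'] by (subst last_upt) auto
  qed
  moreover have "distinct ?idx" "set ?idx = {0..Suc (length P)}" using c c1 by (auto simp: set_upt)
  ultimately show False using no_extending_route_pair[OF u u'] by blast
qed

lemma no_detour_skipping_one:
  assumes u: "u \<in> verts G - set P" and u': "u' \<in> verts G - set P" "u \<noteq> u'"
    and c: "1 \<le> c" "c + 4 \<le> length P"
    and nbrs: "c \<in> nbr_positions u'" "c + 3 \<in> nbr_positions u'"
      "Suc c \<in> nbr_positions u" "length P < c + 5 \<or> c + 5 \<in> nbr_positions u"
    and k: "k \<le> Suc (length P)" and free: "free_of (path_graph k) G"
  shows False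
proof -
  let ?idx = "[1..<Suc c] @ [Suc (length P)] @ rev [Suc c..<c + 4] @ [0] @ [c + 5..<Suc (length P)]"
  have "successively (route_adj u u') ?idx"
  proof (intro successively_append successively_upt successively_rev_upt successively_singleton)
    fix i assume "1 \<le> i" "Suc i < Suc c"
    then show "route_adj u u' i (Suc i)" using route_adj_Suc c by auto
  next
    fix i assume "Suc c \<le> i" "Suc i < c + 4"
    then show "route_adj u u' (Suc i) i" using route_adj_Suc c by auto
  next
    fix i assume "c + 5 \<le> i" "Suc i < Suc (length P)"
    then show "route_adj u u' i (Suc i)" using route_adj_Suc c by auto
  next
    assume "[0] \<noteq> []" "[c + 5..<Suc (length P)] \<noteq> []"
    then show "route_adj u u' (last [0]) (hd [c + 5..<Suc (length P)])"
      using c nbrs route_adj_first_iff[of "c + 5" u u'] by auto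
  next
    show "route_adj u u' (last (rev [Suc c..<c + 4])) (hd ([0] @ [c + 5..<Suc (length P)]))"
      using c nbrs route_adj_first_iff[of "Suc c" u u'] by (simp add: last_rev)
  next
    show "route_adj u u' (last [Suc (length P)])
        (hd (rev [Suc c..<c + 4] @ [0] @ [c + 5..<Suc (length P)]))"
      using c nbrs route_adj_last_iff[of "c + 3" u u'] by (simp add: hd_rev add.commute)
  next
    show "route_adj u u' (last [1..<Suc c])
        (hd ([Suc (length P)] @ rev [Suc c..<c + 4] @ [0] @ [c + 5..<Suc (length P)]))"
      using c nbrs route_adj_last_iff[of c u u'] by (subst last_upt) auto
  qed
  moreover have "distinct ?idx" "set ?idx \<subseteq> {0..Suc (length P)}" "k \<le> length ?idx"
    using c k by (auto simp: set_upt)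
  ultimately show False using no_long_route[OF u u' _ _ _ _ free] by blast
qed

lemma no_detour_skipping_one_at_end:
  assumes u: "u \<in> verts G - set P" and u': "u' \<in> verts G - set P" "u \<noteq> u'"
    and p: "length P = q + 6"
    and nbrs: "q + 5 \<in> nbr_positions u" "q + 2 \<in> nbr_positions u"
      "q + 4 \<in> nbr_positions u'" "q = 0 \<or> q \<in> nbr_positions u'"
    and k: "k \<le> Suc (length P)" and free: "free_of (path_graph k) G"
  shows False
proof -
  let ?idx = "rev [q + 5..<q + 7] @ [0] @ [q + 2..<q + 5] @ [Suc (length P)] @ rev [1..<Suc q]"
  have "successively (route_adj u u') ?idx"
  proof (intro successively_append successively_upt successively_rev_upt successively_singleton)
    fix i assume "q + 5 \<le> i" "Suc i < q + 7"
    then show "route_adj u u' (Suc i) i" using route_adj_Suc p by auto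
  next
    fix i assume "q + 2 \<le> i" "Suc i < q + 5"
    then show "route_adj u u' i (Suc i)" using route_adj_Suc p by auto
  next
    fix i assume "1 \<le> i" "Suc i < Suc q"
    then show "route_adj u u' (Suc i) i" using route_adj_Suc p by auto
  next
    assume "[Suc (length P)] \<noteq> []" "rev [1..<Suc q] \<noteq> []"
    then show "route_adj u u' (last [Suc (length P)]) (hd (rev [1..<Suc q]))"
      using p nbrs route_adj_last_iff[of q u u'] by (auto simp: hd_rev)
  next
    show "route_adj u u' (last [q + 2..<q + 5]) (hd ([Suc (length P)] @ rev [1..<Suc q]))"
      using p nbrs route_adj_last_iff[of "q + 4" u u'] by (subst last_upt) (auto simp: add.commute)
  next
    show "route_adj u u' (last [0]) (hd ([q + 2..<q + 5] @ [Suc (length P)] @ rev [1..<Suc q]))"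
      using p nbrs route_adj_first_iff[of "q + 2" u u'] by simp
  next
    show "route_adj u u' (last (rev [q + 5..<q + 7]))
        (hd ([0] @ [q + 2..<q + 5] @ [Suc (length P)] @ rev [1..<Suc q]))"
      using p nbrs route_adj_first_iff[of "q + 5" u u'] by (simp add: last_rev)
  qed
  moreover have "distinct ?idx" "set ?idx \<subseteq> {0..Suc (length P)}" "k \<le> length ?idx"
    using p k by (auto simp: set_upt)
  ultimately show False using no_long_route[OF u u' _ _ _ _ free] by blast
qed

lemma chord_off_parity_switch:
  assumes u: "u \<in> verts G - set P"
    and A: "nbr_positions u = parity_switch t j" and j: "j \<le> t - 1" and p: "length P \<le> 2 * t"
    and ab: "1 \<le> a" "a < b" "b \<le> length P" "a \<notin> nbr_positions u" "b \<notin> nbr_positions u"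
    and chord: "adj G (P ! (a - 1)) (P ! (b - 1))"
  shows "a = 2 * j + 1 \<and> b = 2 * j + 2"
proof -
  note mem = A mem_parity_switch_iff
  have "odd a \<and> a \<le> 2 * j + 1 \<or> even a \<and> 2 * j + 2 \<le> a"
    using ab(1-4) p j unfolding mem by presburger
  moreover have "odd b \<and> b \<le> 2 * j + 1 \<or> even b \<and> 2 * j + 2 \<le> b"
    using ab(1-3,5) p j unfolding mem by presburger
  ultimately have "odd a \<and> odd b \<and> b \<le> 2 * j + 1
      \<or> odd a \<and> a < 2 * j + 1 \<and> even b \<and> 2 * j + 2 \<le> b
      \<or> even a \<and> 2 * j + 2 \<le> a \<and> even b
      \<or> a = 2 * j + 1 \<and> even b \<and> 2 * j + 4 \<le> b
      \<or> a = 2 * j + 1 \<and> b = 2 * j + 2"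
    using ab(2) by presburger
  then consider (low) "odd a" "odd b" "b \<le> 2 * j + 1"
    | (across) "odd a" "a < 2 * j + 1" "even b" "2 * j + 2 \<le> b"
    | (high) "even a" "2 * j + 2 \<le> a" "even b"
    | (switch) "a = 2 * j + 1" "even b" "2 * j + 4 \<le> b"
    | (gap) "a = 2 * j + 1" "b = 2 * j + 2"
    by blast
  then show ?thesis
  proof cases
    case low
    then have "b - 1 \<in> nbr_positions u" "a = 1 \<or> a - 1 \<in> nbr_positions u"
      using ab(1,2) unfolding mem by presburger+
    then show ?thesis using no_chord_to_predecessors[OF u ab(1-3) chord] by blast
  next
    case across
    then have "Suc a \<in> nbr_positions u" "b = length P \<or> Suc b \<in> nbr_positions u"
      using ab(1,3) p unfolding mem by presburger+
    then show ?thesis using no_chord_to_successors[OF u ab(1-3) chord] by blast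
  next
    case high
    then have "Suc a \<in> nbr_positions u" "b = length P \<or> Suc b \<in> nbr_positions u"
      using ab(2,3) p unfolding mem by presburger+
    then show ?thesis using no_chord_to_successors[OF u ab(1-3) chord] by blast
  next
    case switch
    then have "b - 1 \<in> nbr_positions u" "a = 1 \<or> a - 1 \<in> nbr_positions u"
      using ab(3) p unfolding mem by presburger+
    then show ?thesis using no_chord_to_predecessors[OF u ab(1-3) chord] by blast
  qed simp
qed

lemma parity_switch_not_less:
  assumes u: "u \<in> verts G - set P" and u': "u' \<in> verts G - set P" "u \<noteq> u'"
    and p: "length P = 2 * t" and t: "3 \<le> t"
    and A: "nbr_positions u = parity_switch t j" and A': "nbr_positions u' = parity_switch t j'"
    and j': "j' \<le> t - 1" and free: "free_of (path_graph (2 * t + 1)) G"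
  shows "\<not> j < j'"
proof
  assume "j < j'"
  note mem = A A' mem_parity_switch_iff
  consider "j + 2 \<le> j'" | "j' = j + 1" "j + 3 \<le> t" | "j' = j + 1" "j + 2 = t"
    using \<open>j < j'\<close> j' by linarith
  then show False
  proof cases
    case 1
    show False
    proof (rule no_interleaved_nbrs[OF u u', of "2 * j + 2" "2 * j'"])
      show "2 * j + 2 < 2 * j'" "2 * j' < length P" using 1 j' p by simp_all
      show "2 * j + 2 \<in> nbr_positions u'" "2 * j' \<in> nbr_positions u'"
        "Suc (2 * j + 2) \<in> nbr_positions u" "Suc (2 * j') \<in> nbr_positions u"
        unfolding mem using 1 j' p t by presburger+
    qed
  next
    case 2
    show False
    proof (rule no_detour_skipping_one[OF u u', of "2 * j + 2" "2 * t + 1"])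
      show "1 \<le> 2 * j + 2" "2 * j + 2 + 4 \<le> length P" "2 * t + 1 \<le> Suc (length P)"
        using 2 p by simp_all
      show "2 * j + 2 \<in> nbr_positions u'" "2 * j + 2 + 3 \<in> nbr_positions u'"
        "Suc (2 * j + 2) \<in> nbr_positions u"
        "length P < 2 * j + 2 + 5 \<or> 2 * j + 2 + 5 \<in> nbr_positions u"
        unfolding mem using 2 j' p t by presburger+
    qed (rule free)
  next
    case 3
    show False
    proof (rule no_detour_skipping_one_at_end[OF u u', of "2 * t - 6" "2 * t + 1"])
      show "length P = 2 * t - 6 + 6" "2 * t + 1 \<le> Suc (length P)" using p t by simp_all
      show "2 * t - 6 + 5 \<in> nbr_positions u" "2 * t - 6 + 2 \<in> nbr_positions u"
        "2 * t - 6 + 4 \<in> nbr_positions u'" "2 * t - 6 = 0 \<or> 2 * t - 6 \<in> nbr_positions u'"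
        unfolding mem using 3 j' p t by presburger+
    qed (rule free)
  qed
qed

lemma common_parity_switch:
  assumes u: "u \<in> verts G - set P" and u': "u' \<in> verts G - set P" "u \<noteq> u'"
    and p: "length P = 2 * t" and t: "3 \<le> t"
    and A: "nbr_positions u = parity_switch t j" "j \<le> t - 1"
    and A': "nbr_positions u' = parity_switch t j'" "j' \<le> t - 1"
    and free: "free_of (path_graph (2 * t + 1)) G"
  shows "j = j'"
  using parity_switch_not_less[OF u u' p t A(1) A'] parity_switch_not_less[OF u'(1) u _ p t A'(1) A]
    u'(2) free by fastforce

end

section \<open>Vertices off a maximal strong dominating path\<close>

locale dominating_maximal_path = maximal_path +
  assumes dominating: "\<And>v. v \<in> verts G - set P \<Longrightarrow> neighbours G v \<subseteq> set P"
begin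

lemma neighbours_eq_image_nbr_positions:
  assumes u: "u \<in> verts G - set P"
  shows "neighbours G u = (\<lambda>i. P ! (i - 1)) ` nbr_positions u"
proof
  show "neighbours G u \<subseteq> (\<lambda>i. P ! (i - 1)) ` nbr_positions u"
  proof
    fix v assume v: "v \<in> neighbours G u"
    then have "v \<in> set P" using dominating[OF u] by blast
    then obtain i where "i < length P" "v = P ! i" by (metis in_set_conv_nth)
    moreover have "Suc i \<in> nbr_positions u" using v calculation by (simp add: nbr_positions_def neighbours_def)
    ultimately show "v \<in> (\<lambda>i. P ! (i - 1)) ` nbr_positions u" by force
  qed
  show "(\<lambda>i. P ! (i - 1)) ` nbr_positions u \<subseteq> neighbours G u"
    using path by (auto simp: neighbours_def nbr_positions_def is_path_def)
qed

lemma degree_eq_card_nbr_positions: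
  assumes u: "u \<in> verts G - set P"
  shows "degree G u = card (nbr_positions u)"
proof -
  have "inj_on (\<lambda>i. P ! (i - 1)) (nbr_positions u)"
    by (rule inj_onI) (use nth_path_eq_iff in \<open>auto simp: nbr_positions_def\<close>)
  then show ?thesis by (simp add: degree_def neighbours_eq_image_nbr_positions[OF u] card_image)
qed

end

locale path_free_setting = dominating_maximal_path +
  fixes k :: nat
  assumes path_free: "free_of (path_graph k) G"
    and two_conn: "two_connected G"
    and order: "k \<le> card (verts G)"
    and min_degree: "\<And>u. u \<in> verts G - set P \<Longrightarrow> delta k \<le> degree G u"
begin

lemma length_less: "length P < k"
proof (rule ccontr)
  assume "\<not> length P < k"
  then have "subgraph_of (path_graph k) G" using subgraph_of_path_graph[OF simple path] by simp
  then show False using path_free by (simp add: free_of_def)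
qed

lemma exists_outside: "\<exists>u. u \<in> verts G - set P"
proof -
  have "card (set P) < card (verts G)"
    using length_less order distinct_card[of P] path by (simp add: is_path_def)
  then have "\<not> verts G \<subseteq> set P" by (meson card_mono finite_set not_le)
  then show ?thesis by blast
qed

lemma nbr_positions_shape:
  assumes u: "u \<in> verts G - set P"
  obtains j where "j \<le> k div 2 - 1" "nbr_positions u = parity_switch (k div 2) j"
    "2 * (k div 2) - 1 \<le> length P" "length P = 2 * (k div 2) - 1 \<Longrightarrow> j = k div 2 - 1"
proof (rule nonconsecutive_eq_parity_switch)
  show "2 \<le> x \<and> x < length P" if "x \<in> nbr_positions u" for x
    using nbr_positions_range[OF u that] .
  show "Suc x \<notin> nbr_positions u" if "x \<in> nbr_positions u" for x
    using nbr_positions_nonconsecutive[OF u that] .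
  show "k div 2 - 1 \<le> card (nbr_positions u)"
    using min_degree[OF u] degree_eq_card_nbr_positions[OF u] by (simp add: delta_def)
  show "1 \<le> length P" "length P \<le> 2 * (k div 2)"
    using path length_less by (auto simp: is_path_def Suc_le_eq)
qed (use that in blast)

lemma common_nbr_positions:
  obtains j where "j \<le> k div 2 - 1"
    "\<And>u. u \<in> verts G - set P \<Longrightarrow> nbr_positions u = parity_switch (k div 2) j"
    "2 * j + 2 \<le> length P \<Longrightarrow> odd k"
proof -
  define t where "t = k div 2"
  obtain u0 where u0: "u0 \<in> verts G - set P" using exists_outside by blast
  obtain j where j: "j \<le> t - 1" "nbr_positions u0 = parity_switch t j" "2 * t - 1 \<le> length P"
    "length P = 2 * t - 1 \<Longrightarrow> j = t - 1"
    using nbr_positions_shape[OF u0] unfolding t_def by blast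
  have "length P \<le> 2 * t" using length_less unfolding t_def by presburger
  then consider "length P = 2 * t - 1" | "length P = 2 * t" using j(3) by linarith
  then show ?thesis
  proof cases
    case 1
    have "nbr_positions u = parity_switch t j" if u: "u \<in> verts G - set P" for u
    proof -
      obtain j' where "nbr_positions u = parity_switch t j'" "length P = 2 * t - 1 \<Longrightarrow> j' = t - 1"
        using nbr_positions_shape[OF u] unfolding t_def by blast
      then show ?thesis using 1 j(4) by simp
    qed
    moreover have "\<not> 2 * j + 2 \<le> length P" using 1 j(4) by simp
    ultimately show ?thesis using that j(1) unfolding t_def by blast
  next
    case 2
    have "2 \<le> degree G u0" using two_connected_degree_ge_2[OF simple two_conn] u0 by blast
    then have "2 \<le> card (nbr_positions u0)" using degree_eq_card_nbr_positions[OF u0] by simp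
    then have t: "3 \<le> t" using card_nbr_positions_le[OF u0] 2 by presburger
    have k: "k = 2 * t + 1" using length_less 2 unfolding t_def by presburger
    then have free: "free_of (path_graph (2 * t + 1)) G" and "odd k" using path_free by simp_all
    have "nbr_positions u = parity_switch t j" if u: "u \<in> verts G - set P" for u
    proof (cases "u = u0")
      case False
      obtain j' where j': "j' \<le> t - 1" "nbr_positions u = parity_switch t j'"
        using nbr_positions_shape[OF u] unfolding t_def by blast
      have "u0 \<noteq> u" using False by simp
      from common_parity_switch[OF u0 u this 2 t j(2,1) j'(2,1) free] show ?thesis
        using j'(2) by simp
    qed (use j(2) in simp)
    then show ?thesis using that j(1) \<open>odd k\<close> unfolding t_def by blast
  qed
qed

lemma edge_off_neighbourhood:
  assumes u0: "u0 \<in> verts G - set P" and j: "j \<le> k div 2 - 1"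
    and common: "\<And>u. u \<in> verts G - set P \<Longrightarrow> nbr_positions u = parity_switch (k div 2) j"
    and ab: "a \<in> verts G - neighbours G u0" "b \<in> verts G - neighbours G u0" "adj G a b"
  shows "2 * j + 2 \<le> length P \<and> {a, b} = {P ! (2 * j), P ! (2 * j + 1)}"
proof -
  \<comment> \<open>all vertices off \<open>P\<close> have the neighbourhood of \<open>u0\<close>, so an edge avoiding it lies on \<open>P\<close>\<close>
  have on_path: "v \<in> set P" if "v \<in> verts G" "adj G v w" "w \<notin> neighbours G u0" for v w
  proof (rule ccontr)
    assume v: "v \<notin> set P"
    then have "neighbours G v = neighbours G u0"
      using that(1) u0 common by (simp add: neighbours_eq_image_nbr_positions)
    then show False using that simple_graph_adj_verts[OF simple] by (auto simp: neighbours_def)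
  qed
  obtain i i' where "i < length P" "a = P ! i" "i' < length P" "b = P ! i'"
    using on_path[of a b] on_path[of b a] ab simple_graph_adj_sym[OF simple]
    by (metis DiffD1 DiffD2 in_set_conv_nth)
  then have pos: "a = P ! (Suc i - 1)" "b = P ! (Suc i' - 1)" "1 \<le> Suc i" "Suc i \<le> length P"
    "1 \<le> Suc i'" "Suc i' \<le> length P" "Suc i \<notin> nbr_positions u0" "Suc i' \<notin> nbr_positions u0"
    using ab nth_path_mem_neighbours_iff[of "Suc i" u0] nth_path_mem_neighbours_iff[of "Suc i'" u0]
    by auto
  have chord: "x = 2 * j + 1 \<and> y = 2 * j + 2"
    if "1 \<le> x" "x < y" "y \<le> length P" "x \<notin> nbr_positions u0" "y \<notin> nbr_positions u0"
      "adj G (P ! (x - 1)) (P ! (y - 1))" for x y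
    using chord_off_parity_switch[OF u0 common[OF u0] j _ that] length_less by presburger
  have "i \<noteq> i'" using pos ab(3) simple_graph_no_loop[OF simple] by auto
  then consider "Suc i < Suc i'" | "Suc i' < Suc i" by linarith
  then show ?thesis
  proof cases
    case 1
    then show ?thesis using chord[of "Suc i" "Suc i'"] pos ab(3) by auto
  next
    case 2
    then show ?thesis using chord[of "Suc i'" "Suc i"] pos ab(3) simple_graph_adj_sym[OF simple]
      by auto
  qed
qed

lemma card_neighbours_outside:
  assumes u: "u \<in> verts G - set P"
  shows "card (neighbours G u) = delta k"
proof -
  have "delta k \<le> card (neighbours G u)" "card (neighbours G u) \<le> (length P - 1) div 2"
    using min_degree[OF u] degree_eq_card_nbr_positions[OF u] card_nbr_positions_le[OF u]
    by (simp_all add: degree_def)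
  then show ?thesis using length_less unfolding delta_def by presburger
qed

lemma two_vertices_off_neighbours:
  assumes u: "u \<in> verts G - set P"
  obtains x y where "x \<in> verts G - neighbours G u" "y \<in> verts G - neighbours G u" "x \<noteq> y"
proof -
  let ?C = "verts G - neighbours G u"
  have fin: "finite ?C" using simple_graph_finite[OF simple] by simp
  have "neighbours G u \<subseteq> verts G" by (auto simp: neighbours_def)
  then have "card ?C = card (verts G) - delta k"
    using card_neighbours_outside[OF u] simple_graph_finite[OF simple]
    by (simp add: card_Diff_subset finite_subset)
  moreover have "2 \<le> k" using length_less path by (cases P) (auto simp: is_path_def)
  ultimately have "\<not> card ?C \<le> Suc 0" using order unfolding delta_def by presburger
  then show ?thesis using that card_le_Suc0_iff_eq[OF fin] by blast
qed

lemma sparse_neighbourhood_complement: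
  obtains u0 x y where "u0 \<in> verts G - set P" "card (neighbours G u0) = delta k"
    "x \<in> verts G - neighbours G u0" "y \<in> verts G - neighbours G u0" "x \<noteq> y"
    "\<And>a b. a \<in> verts G - neighbours G u0 \<Longrightarrow> b \<in> verts G - neighbours G u0 \<Longrightarrow> adj G a b
      \<Longrightarrow> odd k \<and> {a, b} = {x, y}"
proof -
  obtain j where j: "j \<le> k div 2 - 1"
    "\<And>u. u \<in> verts G - set P \<Longrightarrow> nbr_positions u = parity_switch (k div 2) j"
    "2 * j + 2 \<le> length P \<Longrightarrow> odd k"
    by (fact common_nbr_positions)
  obtain u0 where u0: "u0 \<in> verts G - set P" using exists_outside by blast
  note card = card_neighbours_outside[OF u0]
  let ?C = "verts G - neighbours G u0"
  have edge: "2 * j + 2 \<le> length P \<and> {a, b} = {P ! (2 * j), P ! (2 * j + 1)}"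
    if "a \<in> ?C" "b \<in> ?C" "adj G a b" for a b
    by (rule edge_off_neighbourhood[OF u0 j(1)]) (use j(2) that in auto)
  show ?thesis
  proof (cases "2 * j + 2 \<le> length P")
    case True
    let ?x = "P ! (2 * j)" and ?y = "P ! (2 * j + 1)"
    show ?thesis
    proof (rule that[OF u0 card])
      have "2 * j + 1 \<notin> nbr_positions u0" "2 * j + 2 \<notin> nbr_positions u0"
        using j(2)[OF u0] by (simp_all add: mem_parity_switch_iff)
      then show "?x \<in> ?C" "?y \<in> ?C"
        using True nth_path_mem_neighbours_iff[of "2 * j + 1" u0]
          nth_path_mem_neighbours_iff[of "2 * j + 2" u0] path by (auto simp: is_path_def)
      show "?x \<noteq> ?y" using True path by (simp add: is_path_def nth_eq_iff_index_eq)
      show "odd k \<and> {a, b} = {?x, ?y}" if "a \<in> ?C" "b \<in> ?C" "adj G a b" for a b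
        using edge[OF that] j(3) by simp
    qed
  next
    case False
    obtain x y where "x \<in> ?C" "y \<in> ?C" "x \<noteq> y" by (rule two_vertices_off_neighbours[OF u0])
    moreover have "\<not> adj G a b" if "a \<in> ?C" "b \<in> ?C" for a b
      using edge[OF that] False by blast
    ultimately show ?thesis using that[OF u0 card] by blast
  qed
qed

end

theorem lemma3p2:
  fixes G :: "'a graph" and k m n :: nat and P :: "'a list"
  assumes "simple_graph G"
    and "two_connected G"
    and "free_of (path_graph k) G"
    and "free_of (complete_graph m) G"
    and "card (verts G) = n"
    and "n \<ge> k"
    and "strong_dominating_path G P"
    and "\<forall>u \<in> verts G - set P. degree G u \<ge> delta k"
  shows "\<exists>H :: nat graph. simple_graph H \<and> card (verts H) = delta k \<and>
           free_of (complete_graph (m - 1)) H \<and>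
           (if even k
            then subgraph_of G (graph_join H (edgeless_graph (n - delta k)))
            else subgraph_of G (graph_join H
                   (disj_union (edgeless_graph (n - delta k - 2)) (complete_graph 2))))"
proof -
  obtain Q where Q: "is_path G Q" "set P \<subseteq> set Q"
    "\<And>Q'. is_path G Q' \<Longrightarrow> set Q \<subseteq> set Q' \<Longrightarrow> length Q' \<le> length Q"
    using exists_maximal_path_extension[OF assms(1)] assms(7) by (auto simp: strong_dominating_path_def)
  interpret path_free_setting G Q k
  proof unfold_locales
    fix v assume "v \<in> verts G - set Q"
    then have "v \<in> verts G - set P" using Q(2) by blast
    then show "neighbours G v \<subseteq> set Q"
      using assms(7) Q(2) unfolding strong_dominating_path_def by blast
  qed (use assms Q in auto)
  obtain u0 x y where u0: "u0 \<in> verts G - set Q" and card: "card (neighbours G u0) = delta k"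
    and xy: "x \<in> verts G - neighbours G u0" "y \<in> verts G - neighbours G u0" "x \<noteq> y"
    and edges: "\<And>a b. a \<in> verts G - neighbours G u0 \<Longrightarrow> b \<in> verts G - neighbours G u0
      \<Longrightarrow> adj G a b \<Longrightarrow> odd k \<and> {a, b} = {x, y}"
    by (fact sparse_neighbourhood_complement)
  show ?thesis
    by (rule exists_join_decomposition[OF assms(1,4,5) _ card xy]) (use u0 edges in blast)+
qed

end
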